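(* Let $k>0$ and consider the system of ODEs, for $r>0$, $\theta$, $z$, $p_R$, $p_S$ real, \[ \dot r = p_R,\quad \dot\theta = \frac{p_S}{r^2},\quad \dot z = \frac{p_S}{2},\quad \dot p_R = \frac{p_S^2}{r^3} - \frac{2kr^3}{(r^4+16z^2)^{3/2}},\quad \dot p_S = -\frac{8kr^2 z}{(r^4+16z^2)^{3/2}}, \] with $H = \frac{1}{2}\big(p_R^2 + \frac{p_S^2}{r^2}\big) - \frac{k}{\sqrt{r^4+16z^2}}$ (a conserved quantity). If $H<0$, then every solution is bounded, and along it $\sqrt{r^4+16z^2} \le \frac{k}{|H|}$.
   Context: This system describes nonholonomic motion of a point particle on the Heisenberg group $\mathbb{H}^1$ (horizontal distribution spanned by $X=\partial_x-\frac y2\partial_z$, $Y=\partial_y+\frac x2\partial_z$, sub-Riemannian metric $dx^2+dy^2$) in the potential $U=-k/\sqrt{(x^2+y^2)^2+16z^2}$, written in cylindrical coordinates $x=r\cos\theta$, $y=r\sin\theta$; $p_R,p_S$ are the momenta with respect to the horizontal frame $R=\partial_r$, $S=\partial_\theta+\frac{r^2}{2}\partial_z$. *)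

theory Defs
  imports "HOL-Analysis.Analysis"
begin

definition heis_H :: "real \<Rightarrow> real \<Rightarrow> real \<Rightarrow> real \<Rightarrow> real \<Rightarrow> real" where
  "heis_H k r z pR pS = (pR\<^sup>2 + pS\<^sup>2 / r\<^sup>2) / 2 - k / sqrt (r ^ 4 + 16 * z\<^sup>2)"

end

theory Submission
  imports Defs
begin

text \<open>The energy is a first integral. Its kinetic part is nonnegative, so along a solution of
  energy \<open>E < 0\<close> the potential satisfies \<open>k / \<rho> \<ge> \<bar>E\<bar>\<close> with \<open>\<rho> = sqrt (r\<^sup>4 + 16 z\<^sup>2)\<close>, i.e.
  \<open>\<rho> \<le> k / \<bar>E\<bar>\<close>; and \<open>\<rho>\<close> dominates both \<open>r\<^sup>2\<close> and \<open>4 \<bar>z\<bar>\<close>.\<close>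

lemma heis_H_has_real_derivative:
  fixes r z pR pS :: "real \<Rightarrow> real"
  assumes r: "r t \<noteq> 0"
    and dr: "(r has_real_derivative a) (at t within S)"
    and dz: "(z has_real_derivative b) (at t within S)"
    and dpR: "(pR has_real_derivative c) (at t within S)"
    and dpS: "(pS has_real_derivative d) (at t within S)"
  defines "\<rho> \<equiv> \<lambda>t. sqrt (r t ^ 4 + 16 * (z t)\<^sup>2)"
  shows "((\<lambda>t. heis_H k (r t) (z t) (pR t) (pS t)) has_real_derivative
           pR t * c + pS t * d / (r t)\<^sup>2 - (pS t)\<^sup>2 * a / r t ^ 3
           + k * (2 * r t ^ 3 * a + 16 * z t * b) / \<rho> t ^ 3) (at t within S)"
proof -
  have radicand: "r t ^ 4 + 16 * (z t)\<^sup>2 > 0"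
    using r by (simp add: add_pos_nonneg)
  then have \<rho>: "\<rho> t > 0"
    unfolding \<rho>_def by simp
  have "((\<lambda>t. r t ^ 4 + 16 * (z t)\<^sup>2) has_real_derivative 4 * r t ^ 3 * a + 32 * z t * b)
          (at t within S)"
    by (rule derivative_eq_intros dr dz refl | simp)+
  from DERIV_chain2[OF DERIV_real_sqrt[OF radicand] this]
  have d\<rho>: "(\<rho> has_real_derivative (2 * r t ^ 3 * a + 16 * z t * b) / \<rho> t) (at t within S)"
    using \<rho> unfolding \<rho>_def by (elim DERIV_cong) (simp add: field_simps)
  have H: "(\<lambda>t. heis_H k (r t) (z t) (pR t) (pS t))
             = (\<lambda>t. ((pR t)\<^sup>2 + (pS t)\<^sup>2 / (r t)\<^sup>2) / 2 - k / \<rho> t)"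
    by (simp add: heis_H_def \<rho>_def)
  have "(r t)\<^sup>2 \<noteq> 0" "\<rho> t \<noteq> 0"
    using r \<rho> by simp_all
  from DERIV_diff[OF
      DERIV_cdivide[OF DERIV_add[OF DERIV_power[OF dpR, of 2]
          DERIV_divide[OF DERIV_power[OF dpS, of 2] DERIV_power[OF dr] \<open>(r t)\<^sup>2 \<noteq> 0\<close>]], of 2]
      DERIV_divide[OF DERIV_const[of k] d\<rho> \<open>\<rho> t \<noteq> 0\<close>]]
  show ?thesis
    unfolding H
    by (elim DERIV_cong) (use r \<rho> in \<open>simp add: field_simps power2_eq_square power3_eq_cube\<close>)
qed

lemma heis_H_constant_along_solution:
  assumes I: "is_interval I"
    and rnz: "\<And>t. t \<in> I \<Longrightarrow> r t \<noteq> 0"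
    and dr: "\<And>t. t \<in> I \<Longrightarrow> (r has_real_derivative pR t) (at t)"
    and dz: "\<And>t. t \<in> I \<Longrightarrow> (z has_real_derivative pS t / 2) (at t)"
    and dpR: "\<And>t. t \<in> I \<Longrightarrow> (pR has_real_derivative
               (pS t)\<^sup>2 / (r t) ^ 3 - 2 * k * (r t) ^ 3 / (sqrt ((r t) ^ 4 + 16 * (z t)\<^sup>2)) ^ 3) (at t)"
    and dpS: "\<And>t. t \<in> I \<Longrightarrow> (pS has_real_derivative
               - (8 * k * (r t)\<^sup>2 * z t) / (sqrt ((r t) ^ 4 + 16 * (z t)\<^sup>2)) ^ 3) (at t)"
    and "t \<in> I" "s \<in> I"
  shows "heis_H k (r t) (z t) (pR t) (pS t) = heis_H k (r s) (z s) (pR s) (pS s)"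
proof -
  have "((\<lambda>t. heis_H k (r t) (z t) (pR t) (pS t)) has_real_derivative 0) (at t within I)"
    if "t \<in> I" for t
  proof -
    have r: "r t \<noteq> 0"
      using rnz that .
    define \<rho> where "\<rho> = sqrt (r t ^ 4 + 16 * (z t)\<^sup>2)"
    have "\<rho> > 0"
      unfolding \<rho>_def using r by (simp add: add_pos_nonneg)
    with heis_H_has_real_derivative[OF r dr[OF that] dz[OF that] dpR[OF that] dpS[OF that], of k] r
    have "((\<lambda>t. heis_H k (r t) (z t) (pR t) (pS t)) has_real_derivative 0) (at t)"
      unfolding \<rho>_def[symmetric]
      by (elim DERIV_cong) (simp add: field_simps power2_eq_square power3_eq_cube)
    then show ?thesis
      by (rule has_field_derivative_at_within)
  qed
  from has_field_derivative_zero_constant[OF is_interval_convex[OF I] this]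
  obtain c where "\<forall>t\<in>I. heis_H k (r t) (z t) (pR t) (pS t) = c" ..
  with \<open>t \<in> I\<close> \<open>s \<in> I\<close> show ?thesis
    by simp
qed

lemma heis_radius_le_of_heis_H_neg:
  fixes k r z pR pS :: real
  assumes E: "heis_H k r z pR pS < 0"
  shows "sqrt (r ^ 4 + 16 * z\<^sup>2) \<le> k / \<bar>heis_H k r z pR pS\<bar>"
proof -
  define \<rho> where "\<rho> = sqrt (r ^ 4 + 16 * z\<^sup>2)"
  have "(pR\<^sup>2 + pS\<^sup>2 / r\<^sup>2) / 2 \<ge> 0"
    by simp
  then have "- k / \<rho> \<le> heis_H k r z pR pS"
    unfolding heis_H_def \<rho>_def by simp
  with E have bound: "\<bar>heis_H k r z pR pS\<bar> \<le> k / \<rho>"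
    by simp
  have "\<rho> \<noteq> 0"
  proof
    assume "\<rho> = 0"
    with bound E show False
      by simp
  qed
  moreover have "\<rho> \<ge> 0"
    unfolding \<rho>_def by (simp add: add_nonneg_nonneg)
  ultimately have "\<rho> > 0"
    by simp
  with bound E show ?thesis
    unfolding \<rho>_def[symmetric] by (simp add: field_simps)
qed

lemma heis_radius_bounds:
  fixes r z :: real
  shows "r\<^sup>2 \<le> sqrt (r ^ 4 + 16 * z\<^sup>2)" and "4 * \<bar>z\<bar> \<le> sqrt (r ^ 4 + 16 * z\<^sup>2)"
proof -
  have "(r\<^sup>2)\<^sup>2 \<le> r ^ 4 + 16 * z\<^sup>2" "(4 * \<bar>z\<bar>)\<^sup>2 \<le> r ^ 4 + 16 * z\<^sup>2"
    by (simp_all add: power_mult_distrib flip: power_mult)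
  then show "r\<^sup>2 \<le> sqrt (r ^ 4 + 16 * z\<^sup>2)" and "4 * \<bar>z\<bar> \<le> sqrt (r ^ 4 + 16 * z\<^sup>2)"
    by (simp_all add: real_le_rsqrt)
qed

lemma bounded_of_heis_radius_le:
  assumes "\<And>t. t \<in> I \<Longrightarrow> sqrt ((r t) ^ 4 + 16 * (z t)\<^sup>2) \<le> B"
  shows "bounded (r ` I)" and "bounded (z ` I)"
proof -
  have "\<bar>r t\<bar> \<le> sqrt B" if "t \<in> I" for t
    using heis_radius_bounds(1)[where r = "r t" and z = "z t"] assms[OF that]
    by (metis order.trans real_sqrt_abs real_sqrt_le_mono)
  then show "bounded (r ` I)"
    unfolding bounded_iff by (intro exI[of _ "sqrt B"]) auto
  have "\<bar>z t\<bar> \<le> B / 4" if "t \<in> I" for t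
    using heis_radius_bounds(2)[where r = "r t" and z = "z t"] assms[OF that] by linarith
  then show "bounded (z ` I)"
    unfolding bounded_iff by (intro exI[of _ "B / 4"]) auto
qed

text \<open>The angle \<open>\<theta>\<close> is cyclic (it enters neither the energy nor the other equations).\<close>

theorem theorem1:
  fixes k :: real and I :: "real set" and t0 :: real
    and r th z pR pS :: "real \<Rightarrow> real"
  assumes k: "k > 0"
    and I: "open I" "is_interval I" "t0 \<in> I"
    and rpos: "\<And>t. t \<in> I \<Longrightarrow> r t > 0"
    and dr: "\<And>t. t \<in> I \<Longrightarrow> (r has_real_derivative pR t) (at t)"
    and dth: "\<And>t. t \<in> I \<Longrightarrow> (th has_real_derivative pS t / (r t)\<^sup>2) (at t)"
    and dz: "\<And>t. t \<in> I \<Longrightarrow> (z has_real_derivative pS t / 2) (at t)"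
    and dpR: "\<And>t. t \<in> I \<Longrightarrow> (pR has_real_derivative
               (pS t)\<^sup>2 / (r t) ^ 3 - 2 * k * (r t) ^ 3 / (sqrt ((r t) ^ 4 + 16 * (z t)\<^sup>2)) ^ 3) (at t)"
    and dpS: "\<And>t. t \<in> I \<Longrightarrow> (pS has_real_derivative
               - (8 * k * (r t)\<^sup>2 * z t) / (sqrt ((r t) ^ 4 + 16 * (z t)\<^sup>2)) ^ 3) (at t)"
    and Hneg: "heis_H k (r t0) (z t0) (pR t0) (pS t0) < 0"
  shows "bounded (r ` I) \<and> bounded (z ` I) \<and>
         (\<forall>t\<in>I. sqrt ((r t) ^ 4 + 16 * (z t)\<^sup>2)
                  \<le> k / \<bar>heis_H k (r t0) (z t0) (pR t0) (pS t0)\<bar>)"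
proof -
  have radius: "sqrt ((r t) ^ 4 + 16 * (z t)\<^sup>2) \<le> k / \<bar>heis_H k (r t0) (z t0) (pR t0) (pS t0)\<bar>"
    if "t \<in> I" for t
  proof -
    have "heis_H k (r t) (z t) (pR t) (pS t) = heis_H k (r t0) (z t0) (pR t0) (pS t0)"
      using heis_H_constant_along_solution[OF I(2) _ dr dz dpR dpS that I(3)] rpos by force
    with heis_radius_le_of_heis_H_neg[of k "r t" "z t" "pR t" "pS t"] Hneg show ?thesis
      by simp
  qed
  then show ?thesis
    using bounded_of_heis_radius_le[of I r z] by blast
qed

end
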